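(* Let $b\ge 2$ be fixed and $N\ge 2$. Then \[ \int_0^1|\overleftarrow{S}_b(\alpha)|^2\,d\alpha\ll_b N\log N. \]
   Context: For a positive integer $n$ with $L$ digits in base $b$, $n=\sum_{0\leq i<L}\varepsilon_i(n)b^i$ ($\varepsilon_i(n)\in\{0,\dots,b-1\}$, $\varepsilon_{L-1}(n)\neq0$), its digital reverse is $\overleftarrow{n}=\sum_{0\leq i<L}\varepsilon_i(n)b^{L-1-i}$. With $e(x)=\exp(2\pi ix)$, \[ \overleftarrow{S}_b(\alpha)=\sum_{\substack{p\text{ prime},\ \overleftarrow{p}\leq N\\ (\overleftarrow{p},b^3-b)=1}}e(\overleftarrow{p}\alpha)\log p. \] *)

theory Defs
  imports "HOL-Analysis.Analysis" "HOL-Computational_Algebra.Primes"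
begin

definition digit_len :: "nat \<Rightarrow> nat \<Rightarrow> nat" where
  "digit_len b n = (LEAST L. n < b ^ L)"

definition digit :: "nat \<Rightarrow> nat \<Rightarrow> nat \<Rightarrow> nat" where
  "digit b i n = (n div b ^ i) mod b"

definition digit_rev :: "nat \<Rightarrow> nat \<Rightarrow> nat" where
  "digit_rev b n = (let L = digit_len b n in \<Sum>i<L. digit b i n * b ^ (L - 1 - i))"

definition rev_S :: "nat \<Rightarrow> nat \<Rightarrow> real \<Rightarrow> complex" where
  "rev_S b N \<alpha> = (\<Sum>p\<in>{p::nat. prime p \<and> digit_rev b p \<le> N \<and> coprime (digit_rev b p) (b ^ 3 - b)}.
      exp (2 * pi * \<i> * of_real (real (digit_rev b p) * \<alpha>)) * of_real (ln (real p)))"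

end

theory Submission
  imports Defs
begin

text \<open>
  Expanding the square and integrating over [0,1] kills every cross term e((m - n) alpha) with
  m \<noteq> n, so the integral is the sum of (log p)^2 over the primes p counted in the sum, provided
  digit reversal is injective on them. It is: a prime not divisible by b has nonzero last digit and is
  recovered from its reverse, and the only other prime, b itself, reverses to 1. The nonzero last
  digit also makes rev p as long as p, so p < b * rev p \<le> bN. Chebyshev's bound theta(x) \<le> x log 4
  (the primes in (m+1, 2m+1] divide (2m+1 choose m) \<le> 4^m) then bounds the sum of (log p)^2 over
  p \<le> bN by log(bN) * bN log 4, which is O(N log N) for fixed b.
\<close>

lemma prod_primes_dvd:
  fixes A :: "'a :: {factorial_semiring_gcd} set"
  assumes "finite A" "\<And>p. p \<in> A \<Longrightarrow> prime p \<and> p dvd n"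
  shows "\<Prod>A dvd n"
  using assms
proof (induction A rule: finite_induct)
  case (insert p A)
  have "coprime p (\<Prod>A)"
    using insert by (intro prod_coprime_right) (metis insertCI primes_coprime)
  with insert show ?case by (simp add: divides_mult)
qed simp

lemma choose_odd_le_pow4: "(2*m+1) choose m \<le> 4^m"
proof -
  have "2 * ((2*m+1) choose m) = (\<Sum>k\<in>{m,m+1}. (2*m+1) choose k)"
    using binomial_symmetric[of m "2*m+1"] by simp
  also have "\<dots> \<le> (\<Sum>k\<le>2*m+1. (2*m+1) choose k)"
    by (rule sum_mono2) auto
  also have "\<dots> = 2^(2*m+1)"
    by (rule choose_row_sum)
  also have "\<dots> = 2 * 4^m"
    by (simp add: power_mult)
  finally show ?thesis by simp
qed

lemma prod_large_primes_dvd_choose: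
  "\<Prod>{p. prime p \<and> m+1 < p \<and> p \<le> 2*m+1} dvd ((2*m+1) choose m)"
proof (rule prod_primes_dvd, simp, safe)
  fix p :: nat assume p: "prime p" "m+1 < p" "p \<le> 2*m+1"
  have "fact m * fact (m+1) * ((2*m+1) choose m) = fact (2*m+1)"
    using binomial_fact_lemma[of m "2*m+1"] by simp
  moreover have "p dvd fact (2*m+1)" "\<not> p dvd fact m" "\<not> p dvd fact (m+1)"
    using p by (simp_all add: prime_dvd_fact_iff del: fact_Suc)
  ultimately show "p dvd ((2*m+1) choose m)"
    by (metis p(1) prime_dvd_mult_iff)
qed

lemma primorial_le_pow4: "\<Prod>{p::nat. prime p \<and> p \<le> n} \<le> 4^n"
proof (induction n rule: less_induct)
  case (less n)
  show ?case
  proof (cases "n \<le> 2")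
    case True
    then have "prime p \<and> p \<le> n \<longleftrightarrow> n = 2 \<and> p = 2" for p
      using prime_ge_2_nat[of p] by auto
    then have "{p. prime p \<and> p \<le> n} = (if n = 2 then {2} else {})"
      by auto
    then show ?thesis by simp
  next
    case False
    show ?thesis
    proof (cases "even n")
      case True
      with False have "\<not> prime n"
        using prime_odd_nat[of n] by auto
      then have "{p. prime p \<and> p \<le> n} = {p. prime p \<and> p \<le> n - 1}"
        using False by (auto simp: le_eq_less_or_eq)
      then have "\<Prod>{p. prime p \<and> p \<le> n} \<le> 4^(n-1)"
        using less[of "n-1"] False by simp
      also have "\<dots> \<le> 4^n" by simp
      finally show ?thesis .
    next
      case odd: False
      then obtain m where n: "n = 2*m+1" by (metis oddE)
      let ?A = "{p. prime p \<and> p \<le> m+1}" and ?B = "{p. prime p \<and> m+1 < p \<and> p \<le> n}"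
      have "{p. prime p \<and> p \<le> n} = ?A \<union> ?B" using n by auto
      then have "\<Prod>{p. prime p \<and> p \<le> n} = \<Prod>?A * \<Prod>?B"
        by (simp only:) (rule prod.union_disjoint; auto)
      also have "\<dots> \<le> 4^(m+1) * 4^m"
      proof (rule mult_le_mono)
        show "\<Prod>?A \<le> 4^(m+1)" using less[of "m+1"] n False by simp
        have "\<Prod>?B \<le> (2*m+1) choose m"
          using prod_large_primes_dvd_choose[of m] n by (intro dvd_imp_le) auto
        then show "\<Prod>?B \<le> 4^m" using choose_odd_le_pow4 order_trans by blast
      qed
      also have "\<dots> = 4^n" using n by (simp add: power_add[symmetric])
      finally show ?thesis .
    qed
  qed
qed

lemma sum_ln_primes_le: "(\<Sum>p | prime p \<and> p \<le> n. ln (real p)) \<le> real n * ln 4"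
proof -
  have "(\<Sum>p | prime p \<and> p \<le> n. ln (real p)) = ln (\<Prod>p | prime p \<and> p \<le> n. real p)"
    by (subst ln_prod) (auto dest: prime_gt_0_nat)
  also have "\<dots> = ln (real (\<Prod>{p. prime p \<and> p \<le> n}))"
    by simp
  also have "\<dots> \<le> ln (real (4^n))"
  proof (rule ln_mono)
    show "real (\<Prod>{p. prime p \<and> p \<le> n}) \<le> real (4^n)"
      using primorial_le_pow4[of n] by (simp only: of_nat_le_iff)
  qed (auto intro!: prod_pos dest: prime_gt_0_nat)
  also have "\<dots> = real n * ln 4" by (simp add: ln_realpow)
  finally show ?thesis .
qed

lemma less_pow_digit_len: "b \<ge> 2 \<Longrightarrow> n < b ^ digit_len b n"
  unfolding digit_len_def
proof (rule LeastI)
  assume "b \<ge> 2"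
  have "n < 2 ^ n" by (rule less_exp)
  also have "\<dots> \<le> b ^ n" using \<open>b \<ge> 2\<close> by (simp add: power_mono)
  finally show "n < b ^ n" .
qed

lemma digit_len_eqI:
  assumes "b > 0" "b ^ L \<le> n" "n < b ^ Suc L"
  shows "digit_len b n = Suc L"
  unfolding digit_len_def
proof (rule Least_equality)
  fix L' assume "n < b ^ L'"
  show "Suc L \<le> L'"
  proof (rule ccontr)
    assume "\<not> Suc L \<le> L'"
    then have "b ^ L' \<le> b ^ L" using assms(1) by (intro power_increasing) auto
    with assms(2) \<open>n < b ^ L'\<close> show False by simp
  qed
qed fact

lemma digit_len_pos: "b \<ge> 2 \<Longrightarrow> n > 0 \<Longrightarrow> digit_len b n > 0"
  using less_pow_digit_len[of b n] by (cases "digit_len b n") auto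

lemma digit_less: "b > 0 \<Longrightarrow> digit b i n < b"
  by (simp add: digit_def)

lemma mod_pow_eq_digit_sum: "n mod b ^ L = (\<Sum>i<L. digit b i n * b ^ i)"
proof (induction L)
  case (Suc L)
  have "n mod b ^ Suc L = b ^ L * (n div b ^ L mod b) + n mod b ^ L"
    by (metis mod_mult2_eq power_Suc2)
  with Suc show ?case by (simp add: digit_def mult.commute)
qed simp

lemma digit_sum_less_pow:
  assumes "\<And>i. i < L \<Longrightarrow> c i < (b::nat)"
  shows "(\<Sum>i<L. c i * b ^ i) < b ^ L"
  using assms
proof (induction L)
  case (Suc L)
  have "c L + 1 \<le> b" using Suc.prems[of L] by simp
  moreover have "(\<Sum>i<L. c i * b ^ i) + 1 \<le> b ^ L" using Suc by simp
  ultimately have "(\<Sum>i<Suc L. c i * b ^ i) + 1 \<le> (c L + 1) * b ^ L" by simp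
  also have "\<dots> \<le> b ^ Suc L"
    unfolding power_Suc by (rule mult_le_mono1) fact
  finally show ?case by simp
qed simp

lemma digit_sums_eq_imp_eq:
  assumes "\<And>i. i < L \<Longrightarrow> c i < (b::nat)" "\<And>i. i < L \<Longrightarrow> d i < b"
    and "(\<Sum>i<L. c i * b ^ i) = (\<Sum>i<L. d i * b ^ i)"
  shows "i < L \<Longrightarrow> c i = d i"
  using assms
proof (induction L)
  case (Suc L)
  let ?c = "\<Sum>i<L. c i * b ^ i" and ?d = "\<Sum>i<L. d i * b ^ i"
  have "?c < b ^ L" "?d < b ^ L" using Suc.prems by (auto intro: digit_sum_less_pow)
  moreover from this have "b ^ L > 0" by linarith
  ultimately have "(?c + c L * b ^ L) div b ^ L = c L" "(?d + d L * b ^ L) div b ^ L = d L"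
    by simp_all
  moreover have eq: "?c + c L * b ^ L = ?d + d L * b ^ L" using Suc.prems(4) by simp
  ultimately have "c L = d L" by metis
  with eq Suc show ?case by (auto simp: less_Suc_eq)
qed simp

lemma digit_rev_eq_reversed_digit_sum:
  "digit_rev b n = (\<Sum>j<digit_len b n. digit b (digit_len b n - 1 - j) n * b ^ j)"
  unfolding digit_rev_def Let_def
  by (rule sum.reindex_bij_witness[where i="\<lambda>j. digit_len b n - 1 - j" and j="\<lambda>j. digit_len b n - 1 - j"])
    auto

lemma digit_rev_bounds:
  assumes "b \<ge> 2" "\<not> b dvd n"
  shows "b ^ (digit_len b n - 1) \<le> digit_rev b n" "digit_rev b n < b ^ digit_len b n"
proof -
  let ?L = "digit_len b n"
  show "digit_rev b n < b ^ ?L"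
    unfolding digit_rev_eq_reversed_digit_sum using assms(1) by (intro digit_sum_less_pow digit_less) simp
  have "n > 0" using assms(2) by (rule contrapos_np) simp
  then have "?L - 1 < ?L" using digit_len_pos[OF assms(1)] by simp
  moreover have "digit b 0 n \<ge> 1" using assms(2) by (simp add: digit_def dvd_eq_mod_eq_0)
  ultimately have "b ^ (?L - 1) \<le> digit b (?L - 1 - (?L - 1)) n * b ^ (?L - 1)" by simp
  also have "\<dots> \<le> (\<Sum>j<?L. digit b (?L - 1 - j) n * b ^ j)"
    using \<open>?L - 1 < ?L\<close> by (intro member_le_sum) auto
  finally show "b ^ (?L - 1) \<le> digit_rev b n" unfolding digit_rev_eq_reversed_digit_sum .
qed

lemma digit_len_digit_rev:
  assumes "b \<ge> 2" "\<not> b dvd n"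
  shows "digit_len b (digit_rev b n) = digit_len b n"
proof -
  have "n > 0" using assms(2) by (rule contrapos_np) simp
  then have "Suc (digit_len b n - 1) = digit_len b n" using digit_len_pos[OF assms(1)] by simp
  then show ?thesis
    using digit_len_eqI[of b "digit_len b n - 1" "digit_rev b n"] digit_rev_bounds[OF assms] assms(1)
    by simp
qed

lemma inj_on_digit_rev:
  assumes b: "b \<ge> 2"
  shows "inj_on (digit_rev b) {n. \<not> b dvd n}"
proof (rule inj_onI, simp only: mem_Collect_eq)
  fix m n assume "\<not> b dvd m" "\<not> b dvd n" and eq: "digit_rev b m = digit_rev b n"
  let ?L = "digit_len b m"
  have L: "digit_len b n = ?L"
    using eq digit_len_digit_rev[OF b \<open>\<not> b dvd m\<close>] digit_len_digit_rev[OF b \<open>\<not> b dvd n\<close>] by simp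
  have sums: "(\<Sum>j<?L. digit b (?L - 1 - j) m * b ^ j) = (\<Sum>j<?L. digit b (?L - 1 - j) n * b ^ j)"
    using eq unfolding digit_rev_eq_reversed_digit_sum L .
  have rev_digits: "digit b (?L - 1 - j) m = digit b (?L - 1 - j) n" if "j < ?L" for j
    by (rule digit_sums_eq_imp_eq[where c = "\<lambda>j. digit b (?L - 1 - j) m"
          and d = "\<lambda>j. digit b (?L - 1 - j) n", OF _ _ sums that]) (use b in \<open>simp_all add: digit_def\<close>)
  have "digit b i m = digit b i n" if "i < ?L" for i
    using rev_digits[of "?L - 1 - i"] that by simp
  then have "m mod b ^ ?L = n mod b ^ ?L"
    unfolding mod_pow_eq_digit_sum by (intro sum.cong) auto
  moreover have "m mod b ^ ?L = m" "n mod b ^ ?L = n"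
    using less_pow_digit_len[OF b, of m] less_pow_digit_len[OF b, of n] unfolding L by simp_all
  ultimately show "m = n" by simp
qed

lemma less_base_mul_digit_rev:
  assumes "b \<ge> 2" "\<not> b dvd n"
  shows "n < b * digit_rev b n"
proof -
  have "n > 0" using assms(2) by (rule contrapos_np) simp
  have "n < b ^ digit_len b n" by (rule less_pow_digit_len[OF assms(1)])
  also have "\<dots> = b * b ^ (digit_len b n - 1)"
    using digit_len_pos[OF assms(1) \<open>n > 0\<close>] by (subst power_eq_if) simp
  also have "\<dots> \<le> b * digit_rev b n"
    using digit_rev_bounds(1)[OF assms] by simp
  finally show ?thesis .
qed

lemma digit_rev_one: "b \<ge> 2 \<Longrightarrow> digit_rev b 1 = 1"
  using digit_len_eqI[of b 0 1] by (simp add: digit_rev_def digit_def)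

lemma digit_rev_base: "b \<ge> 2 \<Longrightarrow> digit_rev b b = 1"
  using digit_len_eqI[of b 1 b] by (simp add: digit_rev_def digit_def power2_eq_square lessThan_Suc)

lemma prime_digit_rev_eq_1_iff:
  assumes b: "b \<ge> 2" and p: "prime p"
  shows "digit_rev b p = 1 \<longleftrightarrow> p = b"
proof
  assume rev_p: "digit_rev b p = 1"
  show "p = b"
  proof (cases "b dvd p")
    case True
    with b p show ?thesis by (auto simp: prime_nat_iff)
  next
    case False
    moreover have "\<not> b dvd 1" using b by simp
    ultimately have "p = 1"
      using inj_onD[OF inj_on_digit_rev[OF b]] rev_p digit_rev_one[OF b] by simp
    with p show ?thesis by simp
  qed
qed (use digit_rev_base[OF b] in simp)

lemma inj_on_digit_rev_primes:
  assumes b: "b \<ge> 2"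
  shows "inj_on (digit_rev b) {p. prime p}"
proof (rule inj_onI, simp only: mem_Collect_eq)
  fix p q assume p: "prime p" and q: "prime q" and eq: "digit_rev b p = digit_rev b q"
  show "p = q"
  proof (cases "p = b \<or> q = b")
    case True
    with eq show ?thesis
      using prime_digit_rev_eq_1_iff[OF b p] prime_digit_rev_eq_1_iff[OF b q] by auto
  next
    case False
    with b p q have "\<not> b dvd p" "\<not> b dvd q" by (auto simp: prime_nat_iff)
    with eq show ?thesis using inj_onD[OF inj_on_digit_rev[OF b]] by simp
  qed
qed

lemma prime_le_base_mul_digit_rev:
  assumes b: "b \<ge> 2" and p: "prime p"
  shows "p \<le> b * digit_rev b p"
proof (cases "b dvd p")
  case True
  with b p have "p = b" by (auto simp: prime_nat_iff)
  then show ?thesis using digit_rev_base[OF b] by simp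
next
  case False
  then show ?thesis using less_base_mul_digit_rev[OF b] by (simp add: less_imp_le)
qed

lemma has_integral_exp_2pi_int:
  fixes m :: int
  shows "((\<lambda>x::real. exp (2 * pi * \<i> * of_real (of_int m * x))) has_integral (if m = 0 then 1 else 0)) {0..1}"
proof (cases "m = 0")
  case True
  then show ?thesis using has_integral_const_real[of "1::complex" 0 1] by simp
next
  case False
  define c where "c = 2 * pi * \<i> * (of_int m :: complex)"
  have "c \<noteq> 0" using False by (simp add: c_def)
  have "((\<lambda>x::real. exp (c * of_real x) / c) has_vector_derivative exp (c * of_real x)) (at x within {0..1})"
    for x :: real
  proof (rule has_vector_derivative_real_field)
    show "((\<lambda>z. exp (c * z) / c) has_field_derivative exp (c * of_real x)) (at (of_real x))"
      using \<open>c \<noteq> 0\<close> by (auto intro!: derivative_eq_intros)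
  qed
  then have "((\<lambda>x::real. exp (c * of_real x)) has_integral (exp (c * of_real 1) / c - exp (c * of_real 0) / c)) {0..1}"
    by (intro fundamental_theorem_of_calculus) auto
  moreover have "exp (c * of_real 1) = 1"
    using exp_integer_2pi[of "of_int m"] by (simp add: c_def mult_ac)
  ultimately show ?thesis using False by (simp add: c_def mult_ac)
qed

lemma integral_cmod_exp_sum_sq:
  fixes n :: "'a \<Rightarrow> nat" and a :: "'a \<Rightarrow> complex"
  assumes fin: "finite P" and inj: "inj_on n P"
  shows "integral {0..1} (\<lambda>\<alpha>. (cmod (\<Sum>p\<in>P. exp (2 * pi * \<i> * of_real (real (n p) * \<alpha>)) * a p))\<^sup>2)
         = (\<Sum>p\<in>P. (cmod (a p))\<^sup>2)"
proof -
  define S where "S \<alpha> = (\<Sum>p\<in>P. exp (2 * pi * \<i> * of_real (real (n p) * \<alpha>)) * a p)" for \<alpha>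
  define g where "g p q \<alpha> = a p * cnj (a q) * exp (2 * pi * \<i> * of_real (of_int (int (n p) - int (n q)) * \<alpha>))"
    for p q and \<alpha> :: real
  have "S \<alpha> * cnj (S \<alpha>) = (\<Sum>p\<in>P. \<Sum>q\<in>P. g p q \<alpha>)" for \<alpha>
    unfolding S_def g_def cnj_sum sum_product
    by (intro sum.cong refl) (simp add: exp_cnj exp_diff exp_minus field_simps)
  moreover have "(g p q has_integral (if p = q then a p * cnj (a q) else 0)) {0..1}"
    if "p \<in> P" "q \<in> P" for p q
    using has_integral_mult_right[OF has_integral_exp_2pi_int[of "int (n p) - int (n q)"], where c = "a p * cnj (a q)"]
      inj_onD[OF inj _ that] unfolding g_def by (auto split: if_splits)
  then have "((\<lambda>\<alpha>. \<Sum>p\<in>P. \<Sum>q\<in>P. g p q \<alpha>) has_integral (\<Sum>p\<in>P. \<Sum>q\<in>P. if p = q then a p * cnj (a q) else 0)) {0..1}"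
    using fin by (intro has_integral_sum) auto
  ultimately have "((\<lambda>\<alpha>. S \<alpha> * cnj (S \<alpha>)) has_integral (\<Sum>p\<in>P. a p * cnj (a p))) {0..1}"
    using fin by simp
  then have "((\<lambda>\<alpha>. Re (S \<alpha> * cnj (S \<alpha>))) has_integral Re (\<Sum>p\<in>P. a p * cnj (a p))) {0..1}"
    by (rule has_integral_Re)
  then have "((\<lambda>\<alpha>. (cmod (S \<alpha>))\<^sup>2) has_integral (\<Sum>p\<in>P. (cmod (a p))\<^sup>2)) {0..1}"
    by (simp add: complex_mult_cnj cmod_power2)
  then show ?thesis unfolding S_def by (rule integral_unique)
qed

lemma sum_ln_sq_primes_le: "(\<Sum>p | prime p \<and> p \<le> n. (ln (real p))\<^sup>2) \<le> ln (real n) * (real n * ln 4)"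
proof -
  have "(\<Sum>p | prime p \<and> p \<le> n. (ln (real p))\<^sup>2) \<le> (\<Sum>p | prime p \<and> p \<le> n. ln (real n) * ln (real p))"
  proof (rule sum_mono)
    fix p assume "p \<in> {p. prime p \<and> p \<le> n}"
    then have "1 \<le> real p" "real p \<le> real n" using prime_ge_1_nat[of p] by simp_all
    then have "ln (real p) \<le> ln (real n)" "0 \<le> ln (real p)" by simp_all
    then show "(ln (real p))\<^sup>2 \<le> ln (real n) * ln (real p)"
      unfolding power2_eq_square by (rule mult_right_mono)
  qed
  also have "\<dots> = ln (real n) * (\<Sum>p | prime p \<and> p \<le> n. ln (real p))"
    by (rule sum_distrib_left[symmetric])
  also have "\<dots> \<le> ln (real n) * (real n * ln 4)"
  proof (rule mult_left_mono)
    show "0 \<le> ln (real n)" by (cases "n = 0") simp_all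
  qed (rule sum_ln_primes_le)
  finally show ?thesis .
qed

lemma ln_mult_le_scaled_ln:
  fixes x y :: real
  assumes "1 \<le> y" "2 \<le> x"
  shows "ln (y * x) \<le> (ln y / ln 2 + 1) * ln x"
proof -
  have "ln y = ln y / ln 2 * ln 2" by simp
  also have "\<dots> \<le> ln y / ln 2 * ln x"
    using assms by (intro mult_left_mono) simp_all
  finally show ?thesis
    using assms by (simp add: ln_mult distrib_right)
qed

lemma integral_cmod_rev_S_sq_le:
  assumes b: "b \<ge> 2"
  shows "integral {0..1} (\<lambda>\<alpha>. (cmod (rev_S b N \<alpha>))\<^sup>2) \<le> (\<Sum>p | prime p \<and> p \<le> b * N. (ln (real p))\<^sup>2)"
proof -
  define P where "P = {p. prime p \<and> digit_rev b p \<le> N \<and> coprime (digit_rev b p) (b ^ 3 - b)}"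
  have P_sub: "P \<subseteq> {p. prime p \<and> p \<le> b * N}"
  proof
    fix p assume "p \<in> P"
    then have "prime p" "digit_rev b p \<le> N" by (simp_all add: P_def)
    have "p \<le> b * digit_rev b p" by (rule prime_le_base_mul_digit_rev[OF b \<open>prime p\<close>])
    also have "\<dots> \<le> b * N" using \<open>digit_rev b p \<le> N\<close> by simp
    finally show "p \<in> {p. prime p \<and> p \<le> b * N}" using \<open>prime p\<close> by simp
  qed
  then have "finite P" by (rule finite_subset) simp
  have "inj_on (digit_rev b) P"
    using inj_on_digit_rev_primes[OF b] by (rule inj_on_subset) (auto simp: P_def)
  have "integral {0..1} (\<lambda>\<alpha>. (cmod (rev_S b N \<alpha>))\<^sup>2) = (\<Sum>p\<in>P. (cmod (of_real (ln (real p))))\<^sup>2)"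
    unfolding rev_S_def P_def[symmetric] by (rule integral_cmod_exp_sum_sq) fact+
  also have "\<dots> \<le> (\<Sum>p | prime p \<and> p \<le> b * N. (ln (real p))\<^sup>2)"
    using P_sub by (simp add: sum_mono2)
  finally show ?thesis .
qed

theorem lemma4p11:
  fixes b :: nat
  assumes "b \<ge> 2"
  shows "\<exists>C>0. \<forall>N::nat. N \<ge> 2 \<longrightarrow>
           integral {0..1} (\<lambda>\<alpha>. (cmod (rev_S b N \<alpha>))\<^sup>2) \<le> C * real N * ln (real N)"
proof -
  define K where "K = ln (real b) / ln 2 + 1"
  have "K > 0" using assms by (simp add: K_def add_pos_nonneg)
  show ?thesis
  proof (intro exI[of _ "real b * ln 4 * K"] conjI allI impI)
    show "real b * ln 4 * K > 0" using assms \<open>K > 0\<close> by simp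
    fix N :: nat assume N: "N \<ge> 2"
    have "integral {0..1} (\<lambda>\<alpha>. (cmod (rev_S b N \<alpha>))\<^sup>2) \<le> (\<Sum>p | prime p \<and> p \<le> b * N. (ln (real p))\<^sup>2)"
      by (rule integral_cmod_rev_S_sq_le[OF assms])
    also have "\<dots> \<le> ln (real (b * N)) * (real (b * N) * ln 4)"
      by (rule sum_ln_sq_primes_le)
    also have "\<dots> \<le> K * ln (real N) * (real (b * N) * ln 4)"
      using ln_mult_le_scaled_ln[of "real b" "real N"] assms N
      by (intro mult_right_mono) (simp_all add: K_def)
    also have "\<dots> = real b * ln 4 * K * real N * ln (real N)"
      by (simp add: algebra_simps)
    finally show "integral {0..1} (\<lambda>\<alpha>. (cmod (rev_S b N \<alpha>))\<^sup>2) \<le> real b * ln 4 * K * real N * ln (real N)" .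
  qed
qed

end
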